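(* Suppose $C=\{C_i\}_{i\in[n]}$ and $C'=\{C'_i\}_{i\in[n]}$ are normalized spectrahedral representations (by $k\times k$ matrices) of $K_C$ and $K_{C'}$ respectively. Then $\mathrm{hdist}(K_C,K_{C'})\le n^{3/2}\cdot\mathrm{mdist}(C,C')$.
   Context: For real symmetric $k\times k$ matrices $C=\{C_i\}_{i\in[n]}$, $K_C=\{x\in\mathbb{R}^n:\sum_iC_ix_i\succeq0\}$. The representation is normalized if $\sum_iC_i=\mathrm{Id}_k$ and each $C_i\succeq0$. $\mathrm{mdist}(C,C')=\max_i\|C_i-C'_i\|$ (operator norm). $\mathrm{hdist}(K,K')=\max(\sup_{x\in\mathcal{B}\cap K}d(x,K'),\sup_{y\in\mathcal{B}\cap K'}d(y,K))$, with $\mathcal{B}$ the Euclidean unit ball of $\mathbb{R}^n$ and $d$ the Euclidean distance. *)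

theory Defs
  imports "HOL-Analysis.Analysis"
begin

text \<open>Real k x k matrices are rendered as real^'k^'k; the index set [n] as a finite type 'n.\<close>

definition sym_mat :: "real^'k^'k \<Rightarrow> bool" where
  "sym_mat A \<longleftrightarrow> transpose A = A"

definition psd :: "real^'k^'k \<Rightarrow> bool" where
  "psd A \<longleftrightarrow> (\<forall>x. 0 \<le> x \<bullet> (A *v x))"

definition opnorm :: "real^'k^'k \<Rightarrow> real" where
  "opnorm A = onorm (\<lambda>x. A *v x)"

definition spectrahedron :: "('n::finite \<Rightarrow> real^'k^'k) \<Rightarrow> (real^'n) set" where
  "spectrahedron C = {x. psd (\<Sum>i\<in>UNIV. x $ i *\<^sub>R C i)}"

definition normalized_rep :: "('n::finite \<Rightarrow> real^'k^'k) \<Rightarrow> bool" where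
  "normalized_rep C \<longleftrightarrow> (\<forall>i. sym_mat (C i) \<and> psd (C i)) \<and> (\<Sum>i\<in>UNIV. C i) = mat 1"

definition mdist :: "('n::finite \<Rightarrow> real^'k^'k) \<Rightarrow> ('n \<Rightarrow> real^'k^'k) \<Rightarrow> real" where
  "mdist C C' = Max (range (\<lambda>i. opnorm (C i - C' i)))"

definition hdist :: "(real^'n) set \<Rightarrow> (real^'n) set \<Rightarrow> real" where
  "hdist K K' = max (SUP x\<in>cball 0 1 \<inter> K. infdist x K') (SUP y\<in>cball 0 1 \<inter> K'. infdist y K)"

end

theory Submission
  imports Defs
begin

text \<open>Let \<open>d = mdist C C'\<close> and \<open>x \<in> K\<^sub>C\<close> with \<open>\<parallel>x\<parallel> \<le> 1\<close>. Then
  \<open>\<Sum>i. x\<^sub>i C'\<^sub>i\<close> differs from the positive semidefinite \<open>\<Sum>i. x\<^sub>i C\<^sub>i\<close> by a matrix of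
  operator norm at most \<open>\<Sum>i. \<bar>x\<^sub>i\<bar> d \<le> n d\<close>. Since \<open>\<Sum>i. C'\<^sub>i = Id\<close>, moving \<open>x\<close> by
  \<open>t = n d\<close> in every coordinate adds \<open>t Id\<close>, which compensates this error; so the moved
  point lies in \<open>K\<^sub>C\<^sub>'\<close> at distance \<open>\<surd>n t = n\<^bsup>3/2\<^esup> d\<close> from \<open>x\<close>. By symmetry
  this bounds both halves of the Hausdorff distance.\<close>

definition quad_form :: "real^'k^'k \<Rightarrow> real^'k \<Rightarrow> real" where
  "quad_form A v = v \<bullet> (A *v v)"

lemma psd_iff_quad_form: "psd A \<longleftrightarrow> (\<forall>v. 0 \<le> quad_form A v)"
  by (simp add: psd_def quad_form_def)

lemma matrix_vector_mult_sum_left: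
  "finite S \<Longrightarrow> sum f S *v (v::real^'k) = (\<Sum>i\<in>S. f i *v v)"
  by (induction S rule: finite_induct) (auto simp: matrix_vector_mult_add_rdistrib)

lemma quad_form_sum: "finite S \<Longrightarrow> quad_form (\<Sum>i\<in>S. f i) v = (\<Sum>i\<in>S. quad_form (f i) v)"
  by (simp add: quad_form_def matrix_vector_mult_sum_left inner_sum_right)

lemma quad_form_scaleR: "quad_form (c *\<^sub>R A) v = c * quad_form A v"
  by (simp add: quad_form_def scaleR_matrix_vector_assoc[symmetric])

lemma quad_form_sum_scaleR:
  "finite S \<Longrightarrow> quad_form (\<Sum>i\<in>S. c i *\<^sub>R A i) v = (\<Sum>i\<in>S. c i * quad_form (A i) v)"
  by (simp add: quad_form_sum quad_form_scaleR)

lemma quad_form_diff: "quad_form (A - B) v = quad_form A v - quad_form B v"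
  by (simp add: quad_form_def matrix_vector_mult_diff_rdistrib inner_diff_right)

lemma quad_form_mat_1: "quad_form (mat 1) v = (norm v)\<^sup>2"
  by (simp add: quad_form_def power2_norm_eq_inner)

lemma abs_quad_form_le_opnorm: "\<bar>quad_form A v\<bar> \<le> opnorm A * (norm v)\<^sup>2"
proof -
  have "\<bar>quad_form A v\<bar> \<le> norm v * norm (A *v v)"
    unfolding quad_form_def by (rule Cauchy_Schwarz_ineq2)
  also have "\<dots> \<le> norm v * (opnorm A * norm v)"
    unfolding opnorm_def by (intro mult_left_mono onorm) auto
  finally show ?thesis by (simp add: power2_eq_square mult_ac)
qed

lemma opnorm_minus_commute: "opnorm (A - B) = opnorm (B - A)"
proof -
  have "(\<lambda>x. (B - A) *v x) = (\<lambda>x. - ((A - B) *v x))"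
    by (auto simp: matrix_vector_mult_diff_rdistrib)
  then show ?thesis
    unfolding opnorm_def by (simp add: onorm_neg)
qed

lemma norm_const_vec: "norm ((\<chi> i. t) :: real^'n::finite) = sqrt (real CARD('n)) * \<bar>t\<bar>"
  by (simp add: norm_vec_def L2_set_def real_sqrt_mult)

lemma spectrahedron_shift_mem:
  fixes C C' :: "'n::finite \<Rightarrow> real^'k^'k"
  assumes x: "x \<in> spectrahedron C" and one: "(\<Sum>i\<in>UNIV. C' i) = mat 1"
    and d: "\<And>i. opnorm (C i - C' i) \<le> d" and t: "d * (\<Sum>i\<in>UNIV. \<bar>x $ i\<bar>) \<le> t"
  shows "x + (\<chi> i. t) \<in> spectrahedron C'"
  unfolding spectrahedron_def psd_iff_quad_form mem_Collect_eq
proof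
  fix v :: "real^'k"
  let ?q = "\<lambda>A. quad_form A v"
  have x_psd: "0 \<le> (\<Sum>i\<in>UNIV. x $ i * ?q (C i))"
    using x by (simp add: spectrahedron_def psd_iff_quad_form quad_form_sum_scaleR)
  have "(\<Sum>i\<in>UNIV. x $ i * ?q (C i - C' i)) \<le> (\<Sum>i\<in>UNIV. \<bar>x $ i\<bar> * (d * (norm v)\<^sup>2))"
  proof (rule sum_mono)
    fix i
    have "x $ i * ?q (C i - C' i) \<le> \<bar>x $ i\<bar> * \<bar>?q (C i - C' i)\<bar>"
      by (metis abs_ge_self abs_mult)
    also have "\<bar>?q (C i - C' i)\<bar> \<le> d * (norm v)\<^sup>2"
      using abs_quad_form_le_opnorm[of "C i - C' i" v] d[of i]
      by (meson mult_right_mono order_trans zero_le_power2)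
    finally show "x $ i * ?q (C i - C' i) \<le> \<bar>x $ i\<bar> * (d * (norm v)\<^sup>2)"
      by (simp add: mult_left_mono order_trans)
  qed
  also have "\<dots> = d * (\<Sum>i\<in>UNIV. \<bar>x $ i\<bar>) * (norm v)\<^sup>2"
    by (simp add: sum_distrib_left sum_distrib_right mult_ac)
  also have "\<dots> \<le> t * (norm v)\<^sup>2"
    using t by (simp add: mult_right_mono)
  finally have error: "(\<Sum>i\<in>UNIV. x $ i * ?q (C i - C' i)) \<le> t * (norm v)\<^sup>2" .
  have "?q (\<Sum>i\<in>UNIV. (x + (\<chi> i. t)) $ i *\<^sub>R C' i)
      = (\<Sum>i\<in>UNIV. (x $ i + t) * ?q (C' i))"
    by (simp add: quad_form_sum_scaleR)
  also have "\<dots> = (\<Sum>i\<in>UNIV. x $ i * ?q (C i)) - (\<Sum>i\<in>UNIV. x $ i * ?q (C i - C' i))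
        + t * ?q (\<Sum>i\<in>UNIV. C' i)"
    by (simp add: quad_form_sum quad_form_diff algebra_simps
        sum.distrib sum_subtractf sum_distrib_left)
  also have "?q (\<Sum>i\<in>UNIV. C' i) = (norm v)\<^sup>2"
    by (simp add: one quad_form_mat_1)
  finally show "0 \<le> ?q (\<Sum>i\<in>UNIV. (x + (\<chi> i. t)) $ i *\<^sub>R C' i)"
    using x_psd error by linarith
qed

lemma infdist_spectrahedron_le:
  fixes C C' :: "'n::finite \<Rightarrow> real^'k^'k"
  assumes x: "x \<in> spectrahedron C" and nx: "norm x \<le> 1"
    and one: "(\<Sum>i\<in>UNIV. C' i) = mat 1" and d: "\<And>i. opnorm (C i - C' i) \<le> d"
  shows "infdist x (spectrahedron C') \<le> real CARD('n) powr (3/2) * d"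
proof -
  define n where "n = real CARD('n)"
  have "0 \<le> d"
    using d opnorm_def onorm_pos_le order_trans by (metis matrix_vector_mul_bounded_linear)
  have "\<bar>x $ i\<bar> \<le> 1" for i
    using component_le_norm_cart[of x i] nx by simp
  then have "(\<Sum>i\<in>UNIV. \<bar>x $ i\<bar>) \<le> n"
    using sum_bounded_above[of UNIV "\<lambda>i. \<bar>x $ i\<bar>" 1] by (simp add: n_def)
  then have "d * (\<Sum>i\<in>UNIV. \<bar>x $ i\<bar>) \<le> n * d"
    using \<open>0 \<le> d\<close> by (simp add: mult_left_mono mult.commute)
  then have "x + (\<chi> i. n * d) \<in> spectrahedron C'"
    by (rule spectrahedron_shift_mem[OF x one d])
  then have "infdist x (spectrahedron C') \<le> dist x (x + (\<chi> i. n * d))"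
    by (rule infdist_le)
  also have "\<dots> = sqrt n * (n * d)"
    using \<open>0 \<le> d\<close> by (simp add: dist_norm norm_const_vec n_def)
  also have "\<dots> = n powr (3/2) * d"
    using powr_add[of n 1 "1/2"] by (simp add: n_def powr_half_sqrt)
  finally show ?thesis by (simp add: n_def)
qed

lemma SUP_infdist_le:
  fixes K K' :: "'a::real_normed_vector set"
  assumes "0 \<in> K" and "\<And>x. x \<in> cball 0 1 \<inter> K \<Longrightarrow> infdist x K' \<le> b"
  shows "(SUP x\<in>cball 0 1 \<inter> K. infdist x K') \<le> b"
  using assms by (intro cSUP_least) force+

lemma zero_mem_spectrahedron: "0 \<in> spectrahedron C"
  by (simp add: spectrahedron_def psd_def)

theorem lemma13:
  fixes C C' :: "'n::finite \<Rightarrow> real^'k^'k"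
  assumes "normalized_rep C" and "normalized_rep C'"
  shows "hdist (spectrahedron C) (spectrahedron C') \<le> real CARD('n) powr (3/2) * mdist C C'"
proof -
  have one: "(\<Sum>i\<in>UNIV. C i) = mat 1" "(\<Sum>i\<in>UNIV. C' i) = mat 1"
    using assms unfolding normalized_rep_def by auto
  have d: "opnorm (C i - C' i) \<le> mdist C C'" "opnorm (C' i - C i) \<le> mdist C C'" for i
    unfolding mdist_def opnorm_minus_commute[of "C' i"] by (rule Max_ge; simp)+
  show ?thesis
    unfolding hdist_def
    by (intro max.boundedI SUP_infdist_le zero_mem_spectrahedron infdist_spectrahedron_le[OF _ _ one(2) d(1)]
        infdist_spectrahedron_le[OF _ _ one(1) d(2)]) auto
qed

end
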